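(* Assume the $q$-Extended Church–Turing Thesis holds for a computable monotonically increasing overhead function $q:\mathbb N\times\mathbb N\to\mathbb N$. Let $\mathcal D$ be an enumerable domain and let $Q:\mathbb N\times\mathbb N\to\mathbb N$ be a computable monotonically increasing function. Then there exists an algorithm that solves the $\mathbf Q(\mathcal M_{\mathcal D},\mathcal D)$-learning problem from input-output observations, i.e. it learns in the limit, from input-output observations and arbitrary (restricted) input sources $I\subseteq\mathcal D$, every function in $\mathbf Q(\mathcal M_{\mathcal D},\mathcal D)$.
   Context: Learning framework. Let $\mathcal D$ be an enumerable domain. A computational model $M$ on $\mathcal D$ is a computable discrete-time dynamical system together with an input-setting and output-reading convention; it computes a partial (general recursive) function $f_M:\mathcal D\rightharpoonup\mathcal D$ defined exactly on the set $D_M\subseteq\mathcal D$ of inputs on which $M$ halts; $t_M(x)$ is the number of discrete steps $M$ takes on $x\in D_M$. $\mathcal M_{\mathcal D}$ is the set of all computational models on $\mathcal D$; the functions they compute are exactly the general recursive functions $G_{\mathcal D}$. For $\mathcal M\subseteq\mathcal M_{\mathcal D}$, $\mathcal F_{\mathcal M}$ is the set of functions computed by models in $\mathcal M$. An observation map $\alpha$ assigns to a model $M$ and $x\in D_M$ auxiliary information $\alpha(M,x)$; the example of $x$ is $\eta_M(x)=(x,f_M(x),\alpha(M,x))$ and $E_M(S)=\{\eta_M(x):x\in S\}$. A learner $\mathcal L$ solves the $(\mathcal M,\alpha)$-learning problem if there are a computable set of representations $\mathcal R$ and a simulation map $\mathfrak S:\mathcal R\to G_{\mathcal D}$ such that for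 every $M\in\mathcal M$, every input source $I\subseteq\mathcal D$ and every surjection $w:\mathbb N\to I_M:=I\cap D_M$, the hypotheses $R_t=\mathcal L(\eta_M(w_1),\dots,\eta_M(w_t))\in\mathcal R$ satisfy: there exist $t^\star$ and $\hat R$ with $R_t=\hat R$ for all $t\ge t^\star$ and $\mathfrak S(\hat R)$ agrees with $f_M$ on $I_M$. With input-output observations ($\alpha\equiv\varepsilon$, the empty string) and a concept class $\mathcal F\subseteq G_{\mathcal D}$, this is called the $\mathcal F$-learning problem (examples are $(x,f(x))$ for $x\in I\cap D_f$, $D_f$ the domain of $f$). Complexity classes. Let $\mathrm{size}_{\mathcal D}:\mathcal D\to\mathbb N$ be a canonical size measure known to the learner. For $\mathcal M\subseteq\mathcal M_{\mathcal D}$ and computable monotonically increasing $Q:\mathbb N\times\mathbb N\to\mathbb N$, $\mathbf{TIME}^{\mathcal M}_{\mathcal D}(Q(c,n))$ is the set of $f\in\mathcal F_{\mathcal M}$ for which some $M\in\mathcal M$ (not necessarily a Turing machine) computes $f$ on every $x\in D_f$ with $\mathrm{size}_{\mathcal D}(x)=n$ in $O(Q(c,n))$ steps; $\mathbf Q(\mathcal M,\mathcal D)=\bigcup_{c\in\mathbb N}\mathbf{TIME}^{\mathcal M}_{\mathcal D}(Q(c,n))$. Turing machines. Fix a finite problem alphabet $\Sigma$, a blank $\lambda\notin\Sigma$ and a finite tape alphabet $\Gamma\supseteq\Sigma\cup\{\lambda\}$. A TM is $T=(Q,\Gamma,\delta)$ with finite state set $Q$ (containing a start state $q_0$ and halt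 state $q_f$) and $\delta:Q\times\Gamma\to Q\times\Gamma\times\{L,R,S\}$ (write, then move left/right/stay) on a bi-infinite tape; the input $x\in\Sigma^*$ is written on a blank tape with the head on its first symbol; the output $T(x)$ is defined iff at halting the tape contains exactly one contiguous string from $\Sigma^*$, which is the output. $\mathcal T$ denotes this class of TMs, computing the general recursive functions on $\Sigma^*$. $q$-ECTT: for every physically realizable computational model $M$ on $\mathcal D$ there are a constant $c\in\mathbb N$ and a TM $T\in\mathcal T$ such that, for (any natural) computable injective encoding $\varphi:\mathcal D\to\Sigma^*$, whenever $M$'s computation on $x$ takes $t$ steps, $T$ on input $\varphi(x)$ simulates it (producing $\varphi(f_M(x))$) within $q(c,t)$ steps. *)

theory Defs
  imports Main "HOL-Library.Nat_Bijection"
begin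

datatype recf = Zf | Sf | Idf nat | Cnf recf "recf list" | Prf recf recf | Mnf recf

inductive reval :: "recf \<Rightarrow> nat list \<Rightarrow> nat \<Rightarrow> bool" where
  zero: "reval Zf xs 0"
| succ: "reval Sf (x # xs) (Suc x)"
| proj: "i < length xs \<Longrightarrow> reval (Idf i) xs (xs ! i)"
| comp: "length ys = length gs \<Longrightarrow> (\<forall>i < length gs. reval (gs ! i) xs (ys ! i))
          \<Longrightarrow> reval f ys z \<Longrightarrow> reval (Cnf f gs) xs z"
| pr0: "reval f xs y \<Longrightarrow> reval (Prf f g) (0 # xs) y"
| prS: "reval (Prf f g) (n # xs) y \<Longrightarrow> reval g (n # y # xs) z
          \<Longrightarrow> reval (Prf f g) (Suc n # xs) z"
| mu: "reval f (n # xs) 0 \<Longrightarrow> (\<forall>m < n. \<exists>y. reval f (m # xs) y \<and> y \<noteq> 0)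
          \<Longrightarrow> reval (Mnf f) xs n"

definition partial_rec :: "(nat \<Rightarrow> nat option) \<Rightarrow> bool" where
  "partial_rec g \<longleftrightarrow> (\<exists>r. \<forall>x y. reval r [x] y \<longleftrightarrow> g x = Some y)"

definition total_rec :: "(nat \<Rightarrow> nat) \<Rightarrow> bool" where
  "total_rec h \<longleftrightarrow> (\<exists>r. \<forall>x y. reval r [x] y \<longleftrightarrow> y = h x)"

definition total_rec2 :: "(nat \<Rightarrow> nat \<Rightarrow> nat) \<Rightarrow> bool" where
  "total_rec2 h \<longleftrightarrow> total_rec (\<lambda>p. case prod_decode p of (a, b) \<Rightarrow> h a b)"

definition decidable_set :: "nat set \<Rightarrow> bool" where
  "decidable_set A \<longleftrightarrow> total_rec (\<lambda>n. if n \<in> A then 1 else 0)"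

definition mono2 :: "(nat \<Rightarrow> nat \<Rightarrow> nat) \<Rightarrow> bool" where
  "mono2 h \<longleftrightarrow> (\<forall>a b c d. a \<le> c \<longrightarrow> b \<le> d \<longrightarrow> h a b \<le> h c d)"

section \<open>Computational models on the domain (identified with nat via its enumeration)\<close>

record cmodel =
  m_init :: "nat \<Rightarrow> nat"
  m_step :: "nat \<Rightarrow> nat"
  m_halted :: "nat \<Rightarrow> bool"
  m_out :: "nat \<Rightarrow> nat"

definition comp_model :: "cmodel \<Rightarrow> bool" where
  "comp_model M \<longleftrightarrow> total_rec (m_init M) \<and> total_rec (m_step M)
     \<and> total_rec (\<lambda>s. if m_halted M s then 1 else 0) \<and> total_rec (m_out M)"

definition mrun :: "cmodel \<Rightarrow> nat \<Rightarrow> nat \<Rightarrow> nat" where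
  "mrun M x k = (m_step M ^^ k) (m_init M x)"

definition mhalts :: "cmodel \<Rightarrow> nat \<Rightarrow> bool" where
  "mhalts M x \<longleftrightarrow> (\<exists>k. m_halted M (mrun M x k))"

definition mtime :: "cmodel \<Rightarrow> nat \<Rightarrow> nat" where
  "mtime M x = (LEAST k. m_halted M (mrun M x k))"

definition mfun :: "cmodel \<Rightarrow> nat \<Rightarrow> nat option" where
  "mfun M x = (if mhalts M x then Some (m_out M (mrun M x (mtime M x))) else None)"

text \<open>Q(Ms, D) = union over c of TIME^{Ms}(Q(c,n)); O(.) read as
  t_M(x) \<le> K * Q(c, size x) + K for a constant K.\<close>
definition Qclass :: "(nat \<Rightarrow> nat \<Rightarrow> nat) \<Rightarrow> (nat \<Rightarrow> nat) \<Rightarrow> cmodel set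
                      \<Rightarrow> (nat \<Rightarrow> nat option) set" where
  "Qclass Q sz Ms = {f. \<exists>c. \<exists>M\<in>Ms. mfun M = f \<and>
      (\<exists>K. \<forall>x. f x \<noteq> None \<longrightarrow> mtime M x \<le> K * Q c (sz x) + K)}"

datatype dir = Lmv | Rmv | Smv

text \<open>States are 0..<tm_nst; start state 0, halt state 1; tape symbols are nats.\<close>
record tm =
  tm_nst :: nat
  tm_delta :: "nat \<Rightarrow> nat \<Rightarrow> nat \<times> nat \<times> dir"

definition wf_tm :: "nat set \<Rightarrow> tm \<Rightarrow> bool" where
  "wf_tm \<Gamma> T \<longleftrightarrow> 2 \<le> tm_nst T \<and>
     (\<forall>s < tm_nst T. \<forall>a\<in>\<Gamma>. fst (tm_delta T s a) < tm_nst T \<and> fst (snd (tm_delta T s a)) \<in> \<Gamma>)"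

type_synonym tconf = "nat \<times> (int \<Rightarrow> nat) \<times> int"

definition tm_step :: "tm \<Rightarrow> tconf \<Rightarrow> tconf" where
  "tm_step T c = (case c of (s, tp, h) \<Rightarrow>
     if s = 1 then (s, tp, h) else
     (case tm_delta T s (tp h) of (s', a, d) \<Rightarrow>
        (s', tp(h := a), h + (case d of Lmv \<Rightarrow> -1 | Rmv \<Rightarrow> 1 | Smv \<Rightarrow> 0))))"

definition tm_init :: "nat \<Rightarrow> nat list \<Rightarrow> tconf" where
  "tm_init blank xs = (0, \<lambda>i. if 0 \<le> i \<and> i < int (length xs) then xs ! nat i else blank, 0)"

definition tm_tape_output :: "nat set \<Rightarrow> nat \<Rightarrow> (int \<Rightarrow> nat) \<Rightarrow> nat list \<Rightarrow> bool" where
  "tm_tape_output \<Sigma> blank tp ys \<longleftrightarrow> set ys \<subseteq> \<Sigma> \<and>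
     (\<exists>a. \<forall>i. tp i = (if a \<le> i \<and> i < a + int (length ys) then ys ! nat (i - a) else blank))"

definition tm_computes_within :: "nat set \<Rightarrow> nat \<Rightarrow> tm \<Rightarrow> nat list \<Rightarrow> nat list \<Rightarrow> nat \<Rightarrow> bool" where
  "tm_computes_within \<Sigma> blank T xs ys k \<longleftrightarrow>
     (\<exists>j \<le> k. case (tm_step T ^^ j) (tm_init blank xs) of (s, tp, h) \<Rightarrow>
         s = 1 \<and> tm_tape_output \<Sigma> blank tp ys)"

section \<open>q-ECTT (for the class Ms of physically realizable models and the encoding phi)\<close>

definition q_ECTT :: "(nat \<Rightarrow> nat \<Rightarrow> nat) \<Rightarrow> nat set \<Rightarrow> nat set \<Rightarrow> nat \<Rightarrow> (nat \<Rightarrow> nat list)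
                      \<Rightarrow> cmodel set \<Rightarrow> bool" where
  "q_ECTT q \<Sigma> \<Gamma> blank \<phi> Ms \<longleftrightarrow> (\<forall>M\<in>Ms. \<exists>c T. wf_tm \<Gamma> T \<and>
     (\<forall>x. mhalts M x \<longrightarrow>
        tm_computes_within \<Sigma> blank T (\<phi> x) (\<phi> (the (mfun M x))) (q c (mtime M x))))"

definition examples_code :: "(nat \<Rightarrow> nat option) \<Rightarrow> (nat \<Rightarrow> nat) \<Rightarrow> nat \<Rightarrow> nat" where
  "examples_code f w t = list_encode (map (\<lambda>i. prod_encode (w i, the (f (w i)))) [0..<Suc t])"

definition solves_learning :: "(nat \<Rightarrow> nat option) set \<Rightarrow> bool" where
  "solves_learning F \<longleftrightarrow> (\<exists>L R S.
     total_rec L \<and> decidable_set R \<and> (\<forall>n. L n \<in> R) \<and> (\<forall>r\<in>R. partial_rec (S r)) \<and>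
     (\<forall>f\<in>F. \<forall>(I :: nat set) (w :: nat \<Rightarrow> nat).
        (range w = {x \<in> I. f x \<noteq> None}) \<longrightarrow>
        (\<exists>t0 r. \<forall>t \<ge> t0. L (examples_code f w t) = r \<and>
                 (\<forall>x\<in>I. f x \<noteq> None \<longrightarrow> S r x = f x))))"

end

theory Submission
  imports Defs
begin

(* Learning by enumeration. By the q-ECTT, every model M of the class is simulated by a Turing
   machine T within q(c_T, t) steps, and t_M(x) <= K * Q(c, |x|) + K for f_M in the class. So the
   transition table of T together with c_T, c and K yields a clock bound, and running T for that
   many steps is a total procedure. Hence it is decidable whether such a hypothesis is consistent
   with an example (x, y): run the machine, coded arithmetically with the tape as base-B numbers,
   for the clock bound and compare its output with the code of y. The learner guesses the least
   hypothesis consistent with all examples seen so far. Some hypothesis is consistent with all of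
   f, and each smaller one is refuted by a finite stage, so the guesses converge; since consistency
   determines y from x, the limit hypothesis agrees with f on the whole input source. *)

section \<open>Kleene-recursive functions of several arguments\<close>

definition total_recn :: "nat \<Rightarrow> (nat list \<Rightarrow> nat) \<Rightarrow> bool" where
  "total_recn k g \<longleftrightarrow> (\<exists>r. \<forall>xs. length xs = k \<longrightarrow> (\<forall>y. reval r xs y \<longleftrightarrow> y = g xs))"

inductive_cases reval_ZfE: "reval Zf xs y"
inductive_cases reval_SfE: "reval Sf xs y"
inductive_cases reval_IdfE: "reval (Idf i) xs y"
inductive_cases reval_CnfE: "reval (Cnf f gs) xs y"
inductive_cases reval_PrfE: "reval (Prf f g) xs y"
inductive_cases reval_MnfE: "reval (Mnf f) xs y"

lemma total_recn_zero: "total_recn k (\<lambda>_. 0)"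
  unfolding total_recn_def by (rule exI[of _ Zf]) (auto elim: reval_ZfE intro: reval.zero)

lemma total_recn_proj: "i < k \<Longrightarrow> total_recn k (\<lambda>xs. xs ! i)"
  unfolding total_recn_def by (rule exI[of _ "Idf i"]) (auto elim: reval_IdfE intro: reval.proj)

lemma total_recn_succ: "total_recn 1 (\<lambda>xs. Suc (xs ! 0))"
  unfolding total_recn_def
proof (rule exI[of _ Sf], intro allI impI)
  fix xs :: "nat list" and y
  assume "length xs = 1"
  then obtain x where "xs = [x]" by (cases xs) auto
  then show "reval Sf xs y \<longleftrightarrow> y = Suc (xs ! 0)" by (auto elim: reval_SfE intro: reval.succ)
qed

lemma total_recn_comp:
  assumes f: "total_recn m f" and len: "length gs = m" and gs: "\<forall>g\<in>set gs. total_recn k g"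
  shows "total_recn k (\<lambda>xs. f (map (\<lambda>g. g xs) gs))"
proof -
  obtain rf where rf: "\<forall>xs. length xs = m \<longrightarrow> (\<forall>y. reval rf xs y \<longleftrightarrow> y = f xs)"
    using f unfolding total_recn_def by blast
  have "\<forall>i<m. \<exists>r. \<forall>xs. length xs = k \<longrightarrow> (\<forall>y. reval r xs y \<longleftrightarrow> y = (gs ! i) xs)"
    using gs len unfolding total_recn_def by (metis nth_mem)
  then obtain rs where rs: "\<And>i. i < m \<Longrightarrow>
      \<forall>xs. length xs = k \<longrightarrow> (\<forall>y. reval (rs i) xs y \<longleftrightarrow> y = (gs ! i) xs)"
    by metis
  show ?thesis unfolding total_recn_def
  proof (rule exI[of _ "Cnf rf (map rs [0..<m])"], intro allI impI iffI)
    fix xs :: "nat list" and y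
    assume "length xs = k" and "reval (Cnf rf (map rs [0..<m])) xs y"
    then obtain ys where "length ys = m" "\<forall>i<m. reval (rs i) xs (ys ! i)" "reval rf ys y"
      by (auto elim!: reval_CnfE)
    moreover from this have "ys = map (\<lambda>g. g xs) gs"
      using rs \<open>length xs = k\<close> len by (intro nth_equalityI) auto
    ultimately show "y = f (map (\<lambda>g. g xs) gs)" using rf by auto
  next
    fix xs :: "nat list" and y
    assume "length xs = k" and "y = f (map (\<lambda>g. g xs) gs)"
    then show "reval (Cnf rf (map rs [0..<m])) xs y"
      using rs len rf by (intro reval.comp[where ys = "map (\<lambda>g. g xs) gs"]) auto
  qed
qed

lemma total_recn_rec_nat:
  assumes f: "total_recn k f" and g: "total_recn (Suc (Suc k)) g"
    and h: "\<And>n xs. length xs = k \<Longrightarrow> h (n # xs) = rec_nat (f xs) (\<lambda>m v. g (m # v # xs)) n"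
  shows "total_recn (Suc k) h"
proof -
  obtain rf where rf: "\<forall>xs. length xs = k \<longrightarrow> (\<forall>y. reval rf xs y \<longleftrightarrow> y = f xs)"
    using f unfolding total_recn_def by blast
  obtain rg where rg: "\<forall>xs. length xs = Suc (Suc k) \<longrightarrow> (\<forall>y. reval rg xs y \<longleftrightarrow> y = g xs)"
    using g unfolding total_recn_def by blast
  have Prf: "reval (Prf rf rg) (n # xs) y \<longleftrightarrow> y = rec_nat (f xs) (\<lambda>m v. g (m # v # xs)) n"
    if "length xs = k" for n xs y
  proof (induction n arbitrary: y)
    case 0
    show ?case using rf that by (auto elim: reval_PrfE intro: reval.pr0)
  next
    case (Suc n)
    show ?case
      using Suc rg that by (auto elim: reval_PrfE intro: reval.prS)
  qed
  show ?thesis unfolding total_recn_def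
  proof (rule exI[of _ "Prf rf rg"], intro allI impI)
    fix xs :: "nat list" and y
    assume "length xs = Suc k"
    then obtain n xs' where "xs = n # xs'" "length xs' = k" by (cases xs) auto
    then show "reval (Prf rf rg) xs y \<longleftrightarrow> y = h xs" using Prf h by auto
  qed
qed

lemma partial_rec_Least:
  assumes g: "total_recn 2 g"
  shows "partial_rec (\<lambda>x. if \<exists>n. g [n, x] = 0 then Some (LEAST n. g [n, x] = 0) else None)"
proof -
  obtain rg where rg: "\<forall>xs. length xs = 2 \<longrightarrow> (\<forall>y. reval rg xs y \<longleftrightarrow> y = g xs)"
    using g unfolding total_recn_def by blast
  have "reval (Mnf rg) [x] y \<longleftrightarrow> g [y, x] = 0 \<and> (\<forall>m<y. g [m, x] \<noteq> 0)" for x y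
    using rg by (fastforce elim: reval_MnfE intro!: reval.mu)
  also have "\<dots> x y \<longleftrightarrow>
      (if \<exists>n. g [n, x] = 0 then Some (LEAST n. g [n, x] = 0) else None) = Some y" for x y
    by (auto intro!: Least_equality intro: LeastI dest: not_less_Least leI)
  finally show ?thesis unfolding partial_rec_def by blast
qed

lemma total_recn_comp1: "total_recn 1 h \<Longrightarrow> total_recn k g \<Longrightarrow> total_recn k (\<lambda>xs. h [g xs])"
  using total_recn_comp[of 1 h "[g]" k] by simp

lemma total_recn_comp2:
  "total_recn 2 h \<Longrightarrow> total_recn k g1 \<Longrightarrow> total_recn k g2 \<Longrightarrow> total_recn k (\<lambda>xs. h [g1 xs, g2 xs])"
  using total_recn_comp[of 2 h "[g1, g2]" k] by simp

lemma total_recn_Suc: "total_recn k g \<Longrightarrow> total_recn k (\<lambda>xs. Suc (g xs))"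
  using total_recn_comp1[OF total_recn_succ] by simp

lemma total_recn_const: "total_recn k (\<lambda>_. c)"
  by (induction c) (auto intro: total_recn_zero total_recn_Suc)

lemma total_recn_add:
  assumes "total_recn k g" "total_recn k h"
  shows "total_recn k (\<lambda>xs. g xs + h xs)"
proof -
  have "total_recn 2 (\<lambda>xs. xs ! 0 + xs ! 1)"
    unfolding numeral_2_eq_2
  proof (rule total_recn_rec_nat)
    show "total_recn (Suc 0) (\<lambda>xs. xs ! 0)" by (rule total_recn_proj) simp
    show "total_recn (Suc (Suc (Suc 0))) (\<lambda>zs. Suc (zs ! 1))"
      by (intro total_recn_Suc total_recn_proj) simp
    show "(n # xs) ! 0 + (n # xs) ! 1 = rec_nat (xs ! 0) (\<lambda>m y. Suc ((m # y # xs) ! 1)) n"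
      for n xs by (induction n) auto
  qed
  from total_recn_comp2[OF this assms] show ?thesis by simp
qed

lemma total_recn_mult:
  assumes "total_recn k g" "total_recn k h"
  shows "total_recn k (\<lambda>xs. g xs * h xs)"
proof -
  have "total_recn 2 (\<lambda>xs. xs ! 0 * xs ! 1)"
    unfolding numeral_2_eq_2
  proof (rule total_recn_rec_nat)
    show "total_recn (Suc 0) (\<lambda>_. 0)" by (rule total_recn_zero)
    show "total_recn (Suc (Suc (Suc 0))) (\<lambda>zs. zs ! 1 + zs ! 2)"
      by (intro total_recn_add total_recn_proj) simp_all
    show "(n # xs) ! 0 * (n # xs) ! 1 = rec_nat 0 (\<lambda>m y. (m # y # xs) ! 1 + (m # y # xs) ! 2) n"
      for n xs by (induction n) auto
  qed
  from total_recn_comp2[OF this assms] show ?thesis by simp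
qed

lemma total_recn_diff:
  assumes "total_recn k g" "total_recn k h"
  shows "total_recn k (\<lambda>xs. g xs - h xs)"
proof -
  have pred: "total_recn 1 (\<lambda>xs. xs ! 0 - 1)"
    unfolding One_nat_def
  proof (rule total_recn_rec_nat)
    show "total_recn 0 (\<lambda>_. 0)" by (rule total_recn_zero)
    show "total_recn (Suc (Suc 0)) (\<lambda>zs. zs ! 0)" by (rule total_recn_proj) simp
    show "(n # xs) ! 0 - Suc 0 = rec_nat 0 (\<lambda>m y. (m # y # xs) ! 0) n" for n xs by (cases n) auto
  qed
  have "total_recn 2 (\<lambda>xs. xs ! 1 - xs ! 0)"
    unfolding numeral_2_eq_2
  proof (rule total_recn_rec_nat)
    show "total_recn (Suc 0) (\<lambda>xs. xs ! 0)" by (rule total_recn_proj) simp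
    show "total_recn (Suc (Suc (Suc 0))) (\<lambda>zs. zs ! 1 - 1)"
      using total_recn_comp1[OF pred total_recn_proj[of 1]] by simp
    show "(n # xs) ! 1 - (n # xs) ! 0 = rec_nat (xs ! 0) (\<lambda>m y. (m # y # xs) ! 1 - 1) n"
      for n xs by (induction n) auto
  qed
  from total_recn_comp2[OF this assms(2,1)] show ?thesis by simp
qed

lemma total_recn_triangle:
  assumes "total_recn k g"
  shows "total_recn k (\<lambda>xs. triangle (g xs))"
proof -
  have "total_recn 1 (\<lambda>xs. triangle (xs ! 0))"
    unfolding One_nat_def
  proof (rule total_recn_rec_nat)
    show "total_recn 0 (\<lambda>_. 0)" by (rule total_recn_zero)
    show "total_recn (Suc (Suc 0)) (\<lambda>zs. zs ! 1 + Suc (zs ! 0))"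
      by (intro total_recn_add total_recn_Suc total_recn_proj) simp_all
    show "triangle ((n # xs) ! 0) = rec_nat 0 (\<lambda>m y. (m # y # xs) ! 1 + Suc ((m # y # xs) ! 0)) n"
      for n xs by (induction n) auto
  qed
  from total_recn_comp1[OF this assms] show ?thesis by simp
qed

section \<open>Cantor pairing\<close>

abbreviation pair :: "nat \<Rightarrow> nat \<Rightarrow> nat" where
  "pair a b \<equiv> prod_encode (a, b)"

definition pfst :: "nat \<Rightarrow> nat" where
  "pfst p = fst (prod_decode p)"

definition psnd :: "nat \<Rightarrow> nat" where
  "psnd p = snd (prod_decode p)"

lemma pfst_pair [simp]: "pfst (pair a b) = a"
  by (simp add: pfst_def)

lemma psnd_pair [simp]: "psnd (pair a b) = b"
  by (simp add: psnd_def)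

lemma pair_pfst_psnd [simp]: "pair (pfst p) (psnd p) = p"
  by (simp add: pfst_def psnd_def)

lemma total_recn_pair:
  "total_recn k g \<Longrightarrow> total_recn k h \<Longrightarrow> total_recn k (\<lambda>xs. pair (g xs) (h xs))"
  unfolding prod_encode_def by (simp add: total_recn_add total_recn_triangle)

lemma triangle_mono: "a \<le> b \<Longrightarrow> triangle a \<le> triangle b"
  unfolding triangle_def by (intro div_le_mono mult_le_mono) auto

lemma le_triangle: "n \<le> triangle n"
  by (induction n) auto

lemma triangle_pfst_psnd:
  "triangle (pfst p + psnd p) \<le> p" "p < triangle (Suc (pfst p + psnd p))"
  "pfst p = p - triangle (pfst p + psnd p)"
proof -
  have "triangle (pfst p + psnd p) + pfst p = p"
    using pair_pfst_psnd[of p] unfolding prod_encode_def by simp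
  then show "triangle (pfst p + psnd p) \<le> p" "p < triangle (Suc (pfst p + psnd p))"
    "pfst p = p - triangle (pfst p + psnd p)"
    by auto
qed

(* For n = p this counts the m < p with triangle (Suc m) <= p, i.e. it computes the diagonal
   pfst p + psnd p; that is how unpairing is obtained by primitive recursion. *)
definition triangle_count :: "nat \<Rightarrow> nat \<Rightarrow> nat" where
  "triangle_count n p = rec_nat 0 (\<lambda>m c. c + (1 - (triangle (Suc m) - p))) n"

lemma triangle_count_eq: "triangle_count n p = min n (pfst p + psnd p)"
proof (induction n)
  case 0
  show ?case by (simp add: triangle_count_def)
next
  case (Suc n)
  let ?s = "pfst p + psnd p"
  have "triangle (Suc n) \<le> p \<longleftrightarrow> Suc n \<le> ?s"
  proof
    assume "triangle (Suc n) \<le> p"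
    then have "triangle (Suc n) < triangle (Suc ?s)"
      using triangle_pfst_psnd(2) by (rule le_less_trans)
    then show "Suc n \<le> ?s"
      using triangle_mono[of "Suc ?s" "Suc n"] by linarith
  next
    assume "Suc n \<le> ?s"
    then show "triangle (Suc n) \<le> p"
      using triangle_mono triangle_pfst_psnd(1) le_trans by blast
  qed
  then show ?case using Suc by (auto simp: triangle_count_def)
qed

lemma triangle_count_self: "triangle_count p p = pfst p + psnd p"
  using triangle_count_eq[of p p] triangle_pfst_psnd(1)[of p] le_triangle[of "pfst p + psnd p"]
  by simp

lemma total_recn_pfst_psnd:
  assumes "total_recn k g"
  shows total_recn_pfst: "total_recn k (\<lambda>xs. pfst (g xs))"
    and total_recn_psnd: "total_recn k (\<lambda>xs. psnd (g xs))"
proof -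
  have "total_recn 2 (\<lambda>xs. triangle_count (xs ! 0) (xs ! 1))"
    unfolding numeral_2_eq_2
  proof (rule total_recn_rec_nat)
    show "total_recn (Suc 0) (\<lambda>_. 0)" by (rule total_recn_zero)
    show "total_recn (Suc (Suc (Suc 0)))
        (\<lambda>zs. zs ! 1 + (1 - (triangle (Suc (zs ! 0)) - zs ! 2)))"
      by (intro total_recn_add total_recn_diff total_recn_const total_recn_triangle
          total_recn_Suc total_recn_proj) simp_all
    show "triangle_count ((n # xs) ! 0) ((n # xs) ! 1) =
        rec_nat 0 (\<lambda>m c. (m # c # xs) ! 1 + (1 - (triangle (Suc ((m # c # xs) ! 0)) - (m # c # xs) ! 2))) n"
      for n xs by (simp add: triangle_count_def)
  qed
  from total_recn_comp2[OF this assms assms]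
  have sum: "total_recn k (\<lambda>xs. pfst (g xs) + psnd (g xs))"
    by (simp add: triangle_count_self)
  show "total_recn k (\<lambda>xs. pfst (g xs))"
    using total_recn_diff[OF assms total_recn_triangle[OF sum]]
    by (subst triangle_pfst_psnd(3)) simp
  from total_recn_diff[OF sum this] show "total_recn k (\<lambda>xs. psnd (g xs))"
    by simp
qed

lemma total_rec_iff_total_recn: "total_rec f \<longleftrightarrow> total_recn 1 (\<lambda>xs. f (xs ! 0))"
proof
  assume "total_rec f"
  then obtain r where r: "\<forall>x y. reval r [x] y \<longleftrightarrow> y = f x"
    unfolding total_rec_def by blast
  show "total_recn 1 (\<lambda>xs. f (xs ! 0))" unfolding total_recn_def
  proof (rule exI[of _ r], intro allI impI)
    fix xs :: "nat list" and y
    assume "length xs = 1"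
    then obtain x where "xs = [x]" by (cases xs) auto
    then show "reval r xs y \<longleftrightarrow> y = f (xs ! 0)" using r by simp
  qed
next
  assume "total_recn 1 (\<lambda>xs. f (xs ! 0))"
  then show "total_rec f"
    unfolding total_recn_def total_rec_def by (metis length_Cons list.size(3) nth_Cons_0 One_nat_def)
qed

lemma total_recn_total_rec_comp: "total_rec f \<Longrightarrow> total_recn k g \<Longrightarrow> total_recn k (\<lambda>xs. f (g xs))"
  using total_recn_comp1[of "\<lambda>xs. f (xs ! 0)"] by (simp add: total_rec_iff_total_recn)

lemma total_rec_cong: "total_rec f \<Longrightarrow> (\<And>x. f x = g x) \<Longrightarrow> total_rec g"
  by (metis ext)

lemma total_rec_id: "total_rec (\<lambda>x. x)"
  unfolding total_rec_iff_total_recn by (rule total_recn_proj) simp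

lemma total_rec_const: "total_rec (\<lambda>_. c)"
  unfolding total_rec_iff_total_recn by (rule total_recn_const)

lemma total_rec_Suc: "total_rec g \<Longrightarrow> total_rec (\<lambda>x. Suc (g x))"
  unfolding total_rec_iff_total_recn by (rule total_recn_Suc)

lemma total_rec_add: "total_rec g \<Longrightarrow> total_rec h \<Longrightarrow> total_rec (\<lambda>x. g x + h x)"
  unfolding total_rec_iff_total_recn by (rule total_recn_add)

lemma total_rec_diff: "total_rec g \<Longrightarrow> total_rec h \<Longrightarrow> total_rec (\<lambda>x. g x - h x)"
  unfolding total_rec_iff_total_recn by (rule total_recn_diff)

lemma total_rec_mult: "total_rec g \<Longrightarrow> total_rec h \<Longrightarrow> total_rec (\<lambda>x. g x * h x)"
  unfolding total_rec_iff_total_recn by (rule total_recn_mult)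

lemma total_rec_pair: "total_rec g \<Longrightarrow> total_rec h \<Longrightarrow> total_rec (\<lambda>x. pair (g x) (h x))"
  unfolding total_rec_iff_total_recn by (rule total_recn_pair)

lemma total_rec_pfst: "total_rec g \<Longrightarrow> total_rec (\<lambda>x. pfst (g x))"
  unfolding total_rec_iff_total_recn by (rule total_recn_pfst)

lemma total_rec_psnd: "total_rec g \<Longrightarrow> total_rec (\<lambda>x. psnd (g x))"
  unfolding total_rec_iff_total_recn by (rule total_recn_psnd)

lemma total_rec_comp: "total_rec f \<Longrightarrow> total_rec g \<Longrightarrow> total_rec (\<lambda>x. f (g x))"
  unfolding total_rec_iff_total_recn[of "\<lambda>x. f (g x)"] total_rec_iff_total_recn[of g]
  by (rule total_recn_total_rec_comp)

lemma total_rec2_iff: "total_rec2 F \<longleftrightarrow> total_rec (\<lambda>z. F (pfst z) (psnd z))"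
  unfolding total_rec2_def pfst_def psnd_def by (simp add: case_prod_beta)

lemma total_rec2_comp:
  assumes "total_rec2 f" "total_rec g" "total_rec h"
  shows "total_rec (\<lambda>x. f (g x) (h x))"
  using total_rec_comp[OF assms(1)[unfolded total_rec2_def] total_rec_pair[OF assms(2,3)]]
  by simp

lemma total_rec_funpow:
  assumes F: "total_rec F" and "total_rec n" "total_rec s"
  shows "total_rec (\<lambda>x. (F ^^ n x) (s x))"
proof -
  have "total_recn 2 (\<lambda>xs. (F ^^ (xs ! 0)) (xs ! 1))"
    unfolding numeral_2_eq_2
  proof (rule total_recn_rec_nat)
    show "total_recn (Suc 0) (\<lambda>xs. xs ! 0)" by (rule total_recn_proj) simp
    show "total_recn (Suc (Suc (Suc 0))) (\<lambda>zs. F (zs ! 1))"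
      by (intro total_recn_total_rec_comp[OF F] total_recn_proj) simp
    show "(F ^^ ((n # xs) ! 0)) ((n # xs) ! 1) = rec_nat (xs ! 0) (\<lambda>m y. F ((m # y # xs) ! 1)) n"
      for n xs by (induction n) auto
  qed
  from total_recn_comp2[OF this] assms(2,3) show ?thesis
    unfolding total_rec_iff_total_recn by simp
qed

definition rec_pred :: "(nat \<Rightarrow> bool) \<Rightarrow> bool" where
  "rec_pred P \<longleftrightarrow> total_rec (\<lambda>x. if P x then 1 else 0)"

lemma total_rec_if:
  assumes P: "rec_pred P" and "total_rec g" "total_rec h"
  shows "total_rec (\<lambda>x. if P x then g x else h x)"
proof -
  have "total_rec (\<lambda>x. (if P x then 1 else 0) * g x + (1 - (if P x then 1 else 0)) * h x)"
    using P assms(2,3) unfolding rec_pred_def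
    by (intro total_rec_add total_rec_mult total_rec_diff total_rec_const)
  then show ?thesis by (rule total_rec_cong) simp
qed

lemma rec_pred_comp: "rec_pred P \<Longrightarrow> total_rec g \<Longrightarrow> rec_pred (\<lambda>x. P (g x))"
  unfolding rec_pred_def by (rule total_rec_comp[where f = "\<lambda>x. if P x then 1 else 0"])

lemma rec_pred2_comp:
  "rec_pred (\<lambda>z. P (pfst z) (psnd z)) \<Longrightarrow> total_rec g \<Longrightarrow> total_rec h \<Longrightarrow> rec_pred (\<lambda>x. P (g x) (h x))"
  using rec_pred_comp[of _ "\<lambda>x. pair (g x) (h x)"] total_rec_pair[of g h] by fastforce

lemma rec_pred_le: "total_rec g \<Longrightarrow> total_rec h \<Longrightarrow> rec_pred (\<lambda>x. g x \<le> h x)"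
  unfolding rec_pred_def
  by (rule total_rec_cong[OF total_rec_diff[OF total_rec_const[of 1] total_rec_diff[of g h]]]) auto

lemma rec_pred_not: "rec_pred P \<Longrightarrow> rec_pred (\<lambda>x. \<not> P x)"
  unfolding rec_pred_def by (rule total_rec_cong[OF total_rec_diff[OF total_rec_const[of 1]]]) auto

lemma rec_pred_conj: "rec_pred P \<Longrightarrow> rec_pred R \<Longrightarrow> rec_pred (\<lambda>x. P x \<and> R x)"
  unfolding rec_pred_def
  by (rule total_rec_cong[OF total_rec_mult[of "\<lambda>x. if P x then 1 else 0" "\<lambda>x. if R x then 1 else 0"]])
    auto

lemma rec_pred_eq: "total_rec g \<Longrightarrow> total_rec h \<Longrightarrow> rec_pred (\<lambda>x. g x = h x)"
  using rec_pred_conj[OF rec_pred_le[of g h] rec_pred_le[of h g]] by (simp add: order_eq_iff)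

lemmas total_rec_intros =
  total_rec_id total_rec_const total_rec_Suc total_rec_add total_rec_diff total_rec_mult
  total_rec_pair total_rec_pfst total_rec_psnd total_rec_funpow total_rec_if
  rec_pred_le rec_pred_eq rec_pred_not rec_pred_conj

definition divmod_step :: "nat \<Rightarrow> nat \<Rightarrow> nat" where
  "divmod_step B p = (if Suc (psnd p) = B then pair (Suc (pfst p)) 0 else pair (pfst p) (Suc (psnd p)))"

lemma funpow_divmod_step: "0 < B \<Longrightarrow> (divmod_step B ^^ n) (pair 0 0) = pair (n div B) (n mod B)"
  by (induction n) (auto simp: divmod_step_def div_Suc mod_Suc)

lemma total_rec_div_mod:
  assumes "0 < B" "total_rec g"
  shows total_rec_div: "total_rec (\<lambda>x. g x div B)"
    and total_rec_mod: "total_rec (\<lambda>x. g x mod B)"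
proof -
  have "total_rec (\<lambda>x. (divmod_step B ^^ g x) (pair 0 0))"
    unfolding divmod_step_def using assms(2) by (intro total_rec_intros)
  then have "total_rec (\<lambda>x. pair (g x div B) (g x mod B))"
    by (simp add: funpow_divmod_step assms(1))
  from total_rec_pfst[OF this] total_rec_psnd[OF this]
  show "total_rec (\<lambda>x. g x div B)" "total_rec (\<lambda>x. g x mod B)" by simp_all
qed

lemma funpow_fixed_point: "f x = x \<Longrightarrow> (f ^^ n) x = x"
  by (induction n) auto

lemma total_rec_funpow_param:
  assumes F: "total_rec2 F" and "total_rec p" "total_rec n" "total_rec s"
  shows "total_rec (\<lambda>x. (F (p x) ^^ n x) (s x))"
proof -
  define G where "G st = pair (pfst st) (F (pfst st) (psnd st))" for st
  have G_iter: "(G ^^ k) (pair a c) = pair a ((F a ^^ k) c)" for k a c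
    by (induction k) (simp_all add: G_def)
  have "total_rec G"
    unfolding G_def by (intro total_rec_intros total_rec2_comp[OF F])
  then have "total_rec (\<lambda>x. psnd ((G ^^ n x) (pair (p x) (s x))))"
    using assms(2-4) by (intro total_rec_intros)
  then show ?thesis by (simp add: G_iter)
qed

lemma length_le_list_encode: "length xs \<le> list_encode xs"
proof (induction xs)
  case (Cons x xs)
  then show ?case using le_prod_encode_2[of "list_encode xs" x] by simp
qed simp

definition list_hd_code :: "nat \<Rightarrow> nat" where
  "list_hd_code l = pfst (l - 1)"

definition list_tl_code :: "nat \<Rightarrow> nat" where
  "list_tl_code l = psnd (l - 1)"

lemma list_hd_code_Cons [simp]: "list_hd_code (Suc (pair x l)) = x"
  by (simp add: list_hd_code_def)

lemma list_tl_code_Cons [simp]: "list_tl_code (Suc (pair x l)) = l"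
  by (simp add: list_tl_code_def)

lemma total_rec_list_hd_code: "total_rec g \<Longrightarrow> total_rec (\<lambda>x. list_hd_code (g x))"
  unfolding list_hd_code_def by (intro total_rec_intros)

lemma total_rec_list_tl_code: "total_rec g \<Longrightarrow> total_rec (\<lambda>x. list_tl_code (g x))"
  unfolding list_tl_code_def by (intro total_rec_intros)

lemma list_nth_code:
  "i < length xs \<Longrightarrow> list_hd_code ((list_tl_code ^^ i) (list_encode xs)) = xs ! i"
proof (induction xs arbitrary: i)
  case (Cons x xs)
  then show ?case by (cases i) (simp_all only: funpow_Suc_right comp_def, simp_all)
qed simp

definition fold_code_step :: "(nat \<Rightarrow> nat \<Rightarrow> nat) \<Rightarrow> nat \<Rightarrow> nat" where
  "fold_code_step F st =
     (if pfst st = 0 then st else pair (list_tl_code (pfst st)) (F (list_hd_code (pfst st)) (psnd st)))"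

lemma funpow_fold_code_step:
  "length xs \<le> n \<Longrightarrow> (fold_code_step F ^^ n) (pair (list_encode xs) a) = pair 0 (fold F xs a)"
proof (induction xs arbitrary: n a)
  case Nil
  show ?case by (simp add: funpow_fixed_point fold_code_step_def)
next
  case (Cons x xs)
  then obtain m where n: "n = Suc m" and m: "length xs \<le> m" by (cases n) auto
  have "(fold_code_step F ^^ n) (pair (list_encode (x # xs)) a) =
      (fold_code_step F ^^ m) (fold_code_step F (pair (list_encode (x # xs)) a))"
    unfolding n by (simp only: funpow_Suc_right comp_apply)
  also have "\<dots> = (fold_code_step F ^^ m) (pair (list_encode xs) (F x a))"
    by (simp add: fold_code_step_def)
  finally show ?case using Cons.IH[OF m] by simp
qed

lemma total_rec_fold_list_decode:
  assumes F: "total_rec2 F" and "total_rec l" "total_rec a"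
  shows "total_rec (\<lambda>x. fold F (list_decode (l x)) (a x))"
proof -
  have "total_rec (fold_code_step F)"
    unfolding fold_code_step_def
    by (intro total_rec_intros total_rec2_comp[OF F] total_rec_list_hd_code total_rec_list_tl_code)
  then have "total_rec (\<lambda>x. psnd ((fold_code_step F ^^ l x) (pair (l x) (a x))))"
    using assms(2,3) by (intro total_rec_intros)
  moreover have "psnd ((fold_code_step F ^^ l x) (pair (l x) (a x))) = fold F (list_decode (l x)) (a x)"
    for x using funpow_fold_code_step[OF length_le_list_encode, of "list_decode (l x)"] by simp
  ultimately show ?thesis by simp
qed

(* The state codes (d, i, res); res = Suc d means that no witness below i has been found. *)
definition search_step :: "(nat \<Rightarrow> nat \<Rightarrow> bool) \<Rightarrow> nat \<Rightarrow> nat" where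
  "search_step P st = (let d = pfst st; i = pfst (psnd st); res = psnd (psnd st) in
     pair d (pair (Suc i) (if res = Suc d \<and> P i d then i else res)))"

lemma funpow_search_step:
  "n \<le> Suc d \<Longrightarrow> (search_step P ^^ n) (pair d (pair 0 (Suc d))) =
     pair d (pair n (if \<exists>i<n. P i d then LEAST i. P i d else Suc d))"
proof (induction n)
  case 0
  show ?case by simp
next
  case (Suc n)
  let ?res = "\<lambda>n. if \<exists>i<n. P i d then LEAST i. P i d else Suc d"
  have "(if ?res n = Suc d \<and> P n d then n else ?res n) = ?res (Suc n)"
  proof (cases "\<exists>i<n. P i d")
    case True
    then have "(LEAST i. P i d) < n" by (meson Least_le le_less_trans)
    moreover have "\<exists>i<Suc n. P i d" using True less_SucI by blast
    ultimately show ?thesis using True Suc.prems by auto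
  next
    case False
    then have "(\<exists>i<Suc n. P i d) \<longleftrightarrow> P n d" by (auto simp: less_Suc_eq)
    moreover have "P n d \<Longrightarrow> (LEAST i. P i d) = n"
      using False by (intro Least_equality) (auto simp: not_less[symmetric])
    ultimately show ?thesis using False by auto
  qed
  then show ?case using Suc by (simp add: search_step_def)
qed

lemma total_rec_bounded_Least:
  assumes P: "rec_pred (\<lambda>z. P (pfst z) (psnd z))"
  shows "total_rec (\<lambda>d. if \<exists>i\<le>d. P i d then LEAST i. P i d else Suc d)"
proof -
  have "total_rec (search_step P)"
    unfolding search_step_def Let_def
    by (intro total_rec_intros rec_pred2_comp[OF P])
  then have "total_rec (\<lambda>d. psnd (psnd ((search_step P ^^ Suc d) (pair d (pair 0 (Suc d))))))"
    by (intro total_rec_intros)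
  moreover have "psnd (psnd ((search_step P ^^ Suc d) (pair d (pair 0 (Suc d))))) =
      (if \<exists>i\<le>d. P i d then LEAST i. P i d else Suc d)" for d
    by (subst funpow_search_step) (simp_all add: less_Suc_eq_le)
  ultimately show ?thesis by (rule total_rec_cong)
qed

lemma partial_rec_Least_pred:
  assumes P: "rec_pred (\<lambda>z. P (pfst z) (psnd z))"
  shows "partial_rec (\<lambda>x. if \<exists>y. P x y then Some (LEAST y. P x y) else None)"
proof -
  have "total_recn 2 (\<lambda>xs. pair (xs ! 1) (xs ! 0))"
    by (intro total_recn_pair total_recn_proj) simp_all
  from total_recn_total_rec_comp[OF P[unfolded rec_pred_def] this]
  have "total_recn 2 (\<lambda>xs. if P (xs ! 1) (xs ! 0) then 1 else 0)"
    by simp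
  note partial_rec_Least[OF total_recn_diff[OF total_recn_const[of 2 1] this]]
  moreover have "(1 - (if P ([n, x] ! 1) ([n, x] ! 0) then 1 else 0) = (0::nat)) = P x n" for n x
    by simp
  ultimately show ?thesis by (simp only:)
qed

section \<open>Learning by enumeration\<close>

definition rec_pred3 :: "(nat \<Rightarrow> nat \<Rightarrow> nat \<Rightarrow> bool) \<Rightarrow> bool" where
  "rec_pred3 C \<longleftrightarrow> rec_pred (\<lambda>z. C (pfst z) (pfst (psnd z)) (psnd (psnd z)))"

lemma rec_pred3_comp:
  assumes "rec_pred3 C" "total_rec g" "total_rec h" "total_rec k"
  shows "rec_pred (\<lambda>x. C (g x) (h x) (k x))"
  using rec_pred_comp[OF assms(1)[unfolded rec_pred3_def], of "\<lambda>x. pair (g x) (pair (h x) (k x))"]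
    assms(2-4) by (simp add: total_rec_pair)

definition consistent_with :: "(nat \<Rightarrow> nat \<Rightarrow> nat \<Rightarrow> bool) \<Rightarrow> nat \<Rightarrow> nat \<Rightarrow> bool" where
  "consistent_with C r d \<longleftrightarrow> (\<forall>e \<in> set (list_decode d). C r (pfst e) (psnd e))"

definition enum_learner :: "(nat \<Rightarrow> nat \<Rightarrow> nat \<Rightarrow> bool) \<Rightarrow> nat \<Rightarrow> nat" where
  "enum_learner C d =
     (if \<exists>r\<le>d. consistent_with C r d then LEAST r. consistent_with C r d else Suc d)"

definition enum_hypothesis :: "(nat \<Rightarrow> nat \<Rightarrow> nat \<Rightarrow> bool) \<Rightarrow> nat \<Rightarrow> nat \<Rightarrow> nat option" where
  "enum_hypothesis C r x = (if \<exists>y. C r x y then Some (LEAST y. C r x y) else None)"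

lemma rec_pred_consistent_with:
  assumes C: "rec_pred3 C"
  shows "rec_pred (\<lambda>z. consistent_with C (pfst z) (psnd z))"
proof -
  define G where "G e acc = pair (pfst acc) (if C (pfst acc) (pfst e) (psnd e) then psnd acc else 0)"
    for e acc
  have fold_G: "fold G es (pair r b) = pair r (if \<forall>e\<in>set es. C r (pfst e) (psnd e) then b else 0)"
    for es r b by (induction es arbitrary: b) (auto simp: G_def)
  have "total_rec2 G"
    unfolding total_rec2_iff G_def
    by (intro total_rec_intros rec_pred3_comp[OF C] rec_pred_not rec_pred_eq)
  then have "total_rec (\<lambda>z. psnd (fold G (list_decode (psnd z)) (pair (pfst z) 1)))"
    by (intro total_rec_psnd total_rec_fold_list_decode total_rec_intros)
  then show ?thesis
    unfolding rec_pred_def by (rule total_rec_cong) (simp add: fold_G consistent_with_def)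
qed

lemma total_rec_enum_learner: "rec_pred3 C \<Longrightarrow> total_rec (enum_learner C)"
  unfolding enum_learner_def[abs_def]
  by (rule total_rec_bounded_Least) (rule rec_pred_consistent_with)

lemma partial_rec_enum_hypothesis:
  assumes "rec_pred3 C"
  shows "partial_rec (enum_hypothesis C r)"
  unfolding enum_hypothesis_def[abs_def]
  by (intro partial_rec_Least_pred rec_pred3_comp[OF assms] total_rec_intros)

lemma enum_hypothesis_eq:
  assumes "C r x y" and "\<And>y'. C r x y' \<Longrightarrow> y' = y"
  shows "enum_hypothesis C r x = Some y"
proof -
  have "(LEAST y. C r x y) = y" using assms by (blast intro: Least_equality)
  then show ?thesis using assms(1) by (auto simp: enum_hypothesis_def)
qed

lemma consistent_with_examples_code:
  "consistent_with C r (examples_code f w t) \<longleftrightarrow> (\<forall>i\<le>t. C r (w i) (the (f (w i))))"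
  unfolding consistent_with_def examples_code_def list_encode_inverse
  by (auto simp: less_Suc_eq_le)

lemma examples_code_gt: "t < examples_code f w t"
  using length_le_list_encode[of "map (\<lambda>i. pair (w i) (the (f (w i)))) [0..<Suc t]"]
  by (simp add: examples_code_def)

lemma enum_learner_converges:
  assumes good: "\<forall>i. C r (w i) (the (f (w i)))"
  obtains r0 where "\<forall>i. C r0 (w i) (the (f (w i)))"
    and "\<forall>\<^sub>F t in sequentially. enum_learner C (examples_code f w t) = r0"
proof -
  define P where "P t r \<longleftrightarrow> (\<forall>i\<le>t. C r (w i) (the (f (w i))))" for t r
  define r0 where "r0 = (LEAST r. \<forall>t. P t r)"
  have r0: "\<forall>t. P t r0"
    unfolding r0_def by (rule LeastI[of _ r]) (simp add: P_def good)
  have eventually_inconsistent: "\<forall>r\<in>{..<r0}. \<forall>\<^sub>F t in sequentially. \<not> P t r"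
  proof
    fix r assume "r \<in> {..<r0}"
    then obtain t where "\<not> P t r" unfolding r0_def using not_less_Least by blast
    then show "\<forall>\<^sub>F t in sequentially. \<not> P t r"
      by (auto simp: eventually_sequentially P_def)
  qed
  have "\<forall>\<^sub>F t in sequentially. (\<forall>r\<in>{..<r0}. \<not> P t r) \<and> r0 \<le> t"
    using eventually_ball_finite[OF finite_lessThan eventually_inconsistent] eventually_ge_at_top
    by (rule eventually_conj)
  then have "\<forall>\<^sub>F t in sequentially. enum_learner C (examples_code f w t) = r0"
  proof (rule eventually_mono)
    fix t assume t: "(\<forall>r\<in>{..<r0}. \<not> P t r) \<and> r0 \<le> t"
    have "(LEAST r. P t r) = r0"
    proof (rule Least_equality)
      show "P t r0" using r0 by blast
      show "r0 \<le> r" if "P t r" for r using t that by (meson lessThan_iff not_le)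
    qed
    moreover have "r0 \<le> examples_code f w t" using examples_code_gt[of t f w] t by simp
    ultimately show "enum_learner C (examples_code f w t) = r0"
      using r0 unfolding enum_learner_def consistent_with_examples_code P_def[symmetric] by auto
  qed
  moreover have "\<forall>i. C r0 (w i) (the (f (w i)))" using r0 by (auto simp: P_def)
  ultimately show ?thesis by (rule that[rotated])
qed

theorem solves_learning_by_enumeration:
  assumes C: "rec_pred3 C"
    and functional: "\<And>r x y y'. C r x y \<Longrightarrow> C r x y' \<Longrightarrow> y' = y"
    and witness: "\<And>f. f \<in> F \<Longrightarrow> \<exists>r. \<forall>x. f x \<noteq> None \<longrightarrow> C r x (the (f x))"
  shows "solves_learning F"
  unfolding solves_learning_def
proof (intro exI[of _ "enum_learner C"] exI[of _ UNIV] exI[of _ "enum_hypothesis C"]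
    conjI ballI allI impI)
  show "total_rec (enum_learner C)" using C by (rule total_rec_enum_learner)
  show "decidable_set UNIV" unfolding decidable_set_def by (simp add: total_rec_const)
  show "enum_learner C d \<in> UNIV" for d by simp
  show "partial_rec (enum_hypothesis C r)" for r using C by (rule partial_rec_enum_hypothesis)
next
  fix f I and w :: "nat \<Rightarrow> nat"
  assume "f \<in> F" and w: "range w = {x \<in> I. f x \<noteq> None}"
  then obtain r where r: "\<forall>x. f x \<noteq> None \<longrightarrow> C r x (the (f x))" using witness by blast
  have "\<forall>i. C r (w i) (the (f (w i)))" using r w by (metis (mono_tags, lifting) mem_Collect_eq rangeI)
  then obtain r0 where r0: "\<forall>i. C r0 (w i) (the (f (w i)))"
    and conv: "\<forall>\<^sub>F t in sequentially. enum_learner C (examples_code f w t) = r0"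
    by (rule enum_learner_converges)
  have "enum_hypothesis C r0 x = f x" if "x \<in> I" "f x \<noteq> None" for x
  proof -
    have "x \<in> range w" using that w by blast
    then obtain i where "x = w i" by blast
    then have "C r0 x (the (f x))" using r0 by simp
    then have "enum_hypothesis C r0 x = Some (the (f x))"
      using functional by (metis enum_hypothesis_eq)
    then show ?thesis using that by auto
  qed
  then show "\<exists>t0 r. \<forall>t\<ge>t0. enum_learner C (examples_code f w t) = r \<and>
      (\<forall>x\<in>I. f x \<noteq> None \<longrightarrow> enum_hypothesis C r x = f x)"
    using conv unfolding eventually_sequentially by blast
qed

section \<open>Arithmetic simulation of Turing machines\<close>

(* Swapping the blank with 0 makes the all-blank tape the number 0 in every base. *)
definition sym_code :: "nat \<Rightarrow> nat \<Rightarrow> nat" where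
  "sym_code bl a = (if a = bl then 0 else if a = 0 then bl else a)"

lemma sym_code_sym_code [simp]: "sym_code bl (sym_code bl a) = a"
  by (simp add: sym_code_def)

lemma sym_code_eq_0_iff [simp]: "sym_code bl a = 0 \<longleftrightarrow> a = bl"
  by (auto simp: sym_code_def)

lemma total_rec_sym_code: "total_rec g \<Longrightarrow> total_rec (\<lambda>x. sym_code bl (g x))"
  unfolding sym_code_def by (intro total_rec_intros)

definition digit :: "nat \<Rightarrow> nat \<Rightarrow> nat \<Rightarrow> nat" where
  "digit B k n = n div B ^ k mod B"

lemma digit_0: "digit B 0 n = n mod B"
  by (simp add: digit_def)

lemma digit_Suc: "digit B (Suc k) n = digit B k (n div B)"
  by (simp add: digit_def div_mult2_eq)

lemma digit_zero [simp]: "digit B k 0 = 0"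
  by (simp add: digit_def)

lemma digit_mult_add:
  assumes "c < B"
  shows "digit B 0 (n * B + c) = c" and "digit B (Suc k) (n * B + c) = digit B k n"
  using assms by (simp_all add: digit_0 digit_Suc)

lemma digit_power_mult:
  "0 < B \<Longrightarrow> digit B k (B ^ p * n) = (if k < p then 0 else digit B (k - p) n)"
proof (induction p arbitrary: k)
  case (Suc p)
  have "B ^ Suc p * n = (B ^ p * n) * B + 0" by (simp add: algebra_simps)
  then show ?case using Suc by (cases k) (simp_all only: digit_mult_add, simp_all)
qed simp

lemma digit_eqI:
  assumes B: "2 \<le> B" and digits: "\<And>k. digit B k m = digit B k n"
  shows "m = n"
  using digits
proof (induction "m + n" arbitrary: m n rule: less_induct)
  case less
  show ?case
  proof (cases "m + n = 0")
    case False
    have "m div B \<le> m" "n div B \<le> n" "m div B < m \<or> n div B < n"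
      using False B by (auto intro: div_less_dividend)
    then have "m div B + n div B < m + n" by linarith
    moreover have "digit B k (m div B) = digit B k (n div B)" for k
      using less.prems[of "Suc k"] by (simp add: digit_Suc)
    ultimately have "m div B = n div B" using less.hyps by blast
    moreover have "m mod B = n mod B" using less.prems[of 0] by (simp add: digit_0)
    ultimately show ?thesis by (metis div_mult_mod_eq)
  qed simp
qed

fun word_value :: "nat \<Rightarrow> nat \<Rightarrow> nat list \<Rightarrow> nat" where
  "word_value B bl [] = 0"
| "word_value B bl (x # xs) = sym_code bl x + B * word_value B bl xs"

lemma digit_word_value:
  assumes "\<forall>x\<in>set xs. sym_code bl x < B"
  shows "digit B k (word_value B bl xs) = (if k < length xs then sym_code bl (xs ! k) else 0)"
  using assms
proof (induction xs arbitrary: k)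
  case (Cons x xs)
  then show ?case
    by (cases k) (simp_all add: digit_0 digit_Suc)
qed simp

lemma word_value_inj:
  assumes "0 < B" and xs: "\<forall>x\<in>set xs. sym_code bl x < B \<and> x \<noteq> bl"
    and ys: "\<forall>y\<in>set ys. sym_code bl y < B \<and> y \<noteq> bl"
    and eq: "word_value B bl xs = word_value B bl ys"
  shows "xs = ys"
proof -
  have digits: "(if k < length xs then sym_code bl (xs ! k) else 0) =
      (if k < length ys then sym_code bl (ys ! k) else 0)" for k
    using digit_word_value[of xs bl B k] digit_word_value[of ys bl B k] xs ys eq by auto
  have len: "length xs = length ys"
  proof (rule ccontr)
    assume "length xs \<noteq> length ys"
    then consider "length xs < length ys" | "length ys < length xs" by linarith
    then show False
    proof cases
      case 1
      then show False using digits[of "length xs"] ys nth_mem[OF 1] by auto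
    next
      case 2
      then show False using digits[of "length ys"] xs nth_mem[OF 2] by auto
    qed
  qed
  moreover have "xs ! k = ys ! k" if "k < length xs" for k
  proof -
    have "sym_code bl (xs ! k) = sym_code bl (ys ! k)" using digits[of k] that len by simp
    from arg_cong[OF this, of "sym_code bl"] show ?thesis by simp
  qed
  ultimately show ?thesis by (rule nth_equalityI)
qed

lemma fold_word_value:
  "fold (\<lambda>x acc. pair (pfst acc + sym_code bl x * psnd acc) (psnd acc * B)) xs (pair a m) =
     pair (a + m * word_value B bl xs) (m * B ^ length xs)"
  by (induction xs arbitrary: a m) (simp_all add: algebra_simps)

lemma total_rec_word_value:
  assumes "total_rec g"
  shows "total_rec (\<lambda>x. word_value B bl (list_decode (g x)))"
proof -
  have "total_rec2 (\<lambda>x acc. pair (pfst acc + sym_code bl x * psnd acc) (psnd acc * B))"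
    unfolding total_rec2_iff by (intro total_rec_intros total_rec_sym_code)
  from total_rec_pfst[OF total_rec_fold_list_decode[OF this assms total_rec_const[of "pair 0 1"]]]
  show ?thesis by (simp add: fold_word_value)
qed

(* The code of a tape with head position h is (l, a, r): a is the head cell, and the cells to the
   left and to the right are the base-B digits of l and r, nearest cell first. *)
definition codes_tape :: "nat \<Rightarrow> nat \<Rightarrow> (int \<Rightarrow> nat) \<Rightarrow> int \<Rightarrow> nat \<Rightarrow> bool" where
  "codes_tape B bl tp h t \<longleftrightarrow> (\<exists>l r. t = pair l (pair (sym_code bl (tp h)) r) \<and>
     (\<forall>k. digit B k l = sym_code bl (tp (h - 1 - int k))) \<and>
     (\<forall>k. digit B k r = sym_code bl (tp (h + 1 + int k))))"

definition tape_write :: "nat \<Rightarrow> nat \<Rightarrow> nat" where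
  "tape_write a t = pair (pfst t) (pair a (psnd (psnd t)))"

definition tape_left :: "nat \<Rightarrow> nat \<Rightarrow> nat" where
  "tape_left B t = (let l = pfst t; a = pfst (psnd t); r = psnd (psnd t) in
     pair (l div B) (pair (l mod B) (r * B + a)))"

definition tape_right :: "nat \<Rightarrow> nat \<Rightarrow> nat" where
  "tape_right B t = (let l = pfst t; a = pfst (psnd t); r = psnd (psnd t) in
     pair (l * B + a) (pair (r mod B) (r div B)))"

lemma pfst_tape_left: "pfst (tape_left B t) = pfst t div B"
  by (simp add: tape_left_def Let_def)

lemma codes_tape_head: "codes_tape B bl tp h t \<Longrightarrow> pfst (psnd t) = sym_code bl (tp h)"
  by (auto simp: codes_tape_def)

lemma codes_tape_write:
  "codes_tape B bl tp h t \<Longrightarrow> codes_tape B bl (tp(h := a)) h (tape_write (sym_code bl a) t)"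
  by (auto simp: codes_tape_def tape_write_def)

lemma codes_tape_left:
  assumes t: "codes_tape B bl tp h t" and "0 < B" and head: "sym_code bl (tp h) < B"
  shows "codes_tape B bl tp (h - 1) (tape_left B t)"
proof -
  from t obtain l r where t_eq: "t = pair l (pair (sym_code bl (tp h)) r)"
    and l: "\<forall>k. digit B k l = sym_code bl (tp (h - 1 - int k))"
    and r: "\<forall>k. digit B k r = sym_code bl (tp (h + 1 + int k))"
    unfolding codes_tape_def by blast
  have "digit B k (l div B) = sym_code bl (tp (h - 1 - 1 - int k))" for k
    using l[rule_format, of "Suc k"] by (simp add: digit_Suc algebra_simps)
  moreover have "l mod B = sym_code bl (tp (h - 1))"
    using l[rule_format, of 0] by (simp add: digit_0)
  moreover have "digit B k (r * B + sym_code bl (tp h)) = sym_code bl (tp (h - 1 + 1 + int k))" for k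
    using r head by (cases k) (simp_all add: digit_mult_add, simp add: algebra_simps)
  ultimately show ?thesis
    unfolding codes_tape_def tape_left_def t_eq Let_def by auto
qed

lemma codes_tape_right:
  assumes t: "codes_tape B bl tp h t" and "0 < B" and head: "sym_code bl (tp h) < B"
  shows "codes_tape B bl tp (h + 1) (tape_right B t)"
proof -
  from t obtain l r where t_eq: "t = pair l (pair (sym_code bl (tp h)) r)"
    and l: "\<forall>k. digit B k l = sym_code bl (tp (h - 1 - int k))"
    and r: "\<forall>k. digit B k r = sym_code bl (tp (h + 1 + int k))"
    unfolding codes_tape_def by blast
  have "digit B k (r div B) = sym_code bl (tp (h + 1 + 1 + int k))" for k
    using r[rule_format, of "Suc k"] by (simp add: digit_Suc algebra_simps)
  moreover have "r mod B = sym_code bl (tp (h + 1))"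
    using r[rule_format, of 0] by (simp add: digit_0)
  moreover have "digit B k (l * B + sym_code bl (tp h)) = sym_code bl (tp (h + 1 - 1 - int k))" for k
    using l head by (cases k) (simp_all add: digit_mult_add, simp add: algebra_simps)
  ultimately show ?thesis
    unfolding codes_tape_def tape_right_def t_eq Let_def by auto
qed

fun dir_code :: "dir \<Rightarrow> nat" where
  "dir_code Lmv = 0"
| "dir_code Rmv = 1"
| "dir_code Smv = 2"

definition tape_move :: "nat \<Rightarrow> nat \<Rightarrow> nat \<Rightarrow> nat" where
  "tape_move B d t = (if d = 0 then tape_left B t else if d = 1 then tape_right B t else t)"

lemma codes_tape_move:
  assumes "codes_tape B bl tp h t" "0 < B" "sym_code bl (tp h) < B"
  shows "codes_tape B bl tp (h + (case d of Lmv \<Rightarrow> -1 | Rmv \<Rightarrow> 1 | Smv \<Rightarrow> 0))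
      (tape_move B (dir_code d) t)"
  using codes_tape_left[OF assms] codes_tape_right[OF assms] assms(1)
  by (cases d) (simp_all add: tape_move_def)

definition delta_code :: "tm \<Rightarrow> nat \<Rightarrow> nat \<Rightarrow> nat \<Rightarrow> nat" where
  "delta_code T bl s a = (case tm_delta T s (sym_code bl a) of
     (s', a', d) \<Rightarrow> pair s' (pair (sym_code bl a') (dir_code d)))"

definition delta_table :: "nat \<Rightarrow> nat \<Rightarrow> tm \<Rightarrow> nat" where
  "delta_table B bl T = list_encode (map (\<lambda>i. delta_code T bl (i div B) (i mod B)) [0..<tm_nst T * B])"

(* A configuration is coded as pair s t; the transition for state s and head symbol code a is entry
   s * B + a of the table. *)
definition conf_step :: "nat \<Rightarrow> nat \<Rightarrow> nat \<Rightarrow> nat" where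
  "conf_step B tab c = (let s = pfst c; t = psnd c;
       e = list_hd_code ((list_tl_code ^^ (s * B + pfst (psnd t))) tab) in
     if s = 1 then c else pair (pfst e) (tape_move B (psnd (psnd e)) (tape_write (pfst (psnd e)) t)))"

lemma total_rec2_conf_step:
  assumes "0 < B"
  shows "total_rec2 (conf_step B)"
proof -
  have "total_rec list_tl_code"
    using total_rec_list_tl_code[OF total_rec_id] by simp
  then show ?thesis
    unfolding total_rec2_iff conf_step_def tape_move_def tape_left_def tape_right_def
      tape_write_def Let_def
    by (intro total_rec_intros total_rec_list_hd_code total_rec_div total_rec_mod assms)
qed

definition codes_conf :: "nat \<Rightarrow> nat \<Rightarrow> tconf \<Rightarrow> nat \<Rightarrow> bool" where
  "codes_conf B bl C c \<longleftrightarrow> (case C of (s, tp, h) \<Rightarrow> \<exists>t. c = pair s t \<and> codes_tape B bl tp h t)"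

definition valid_conf :: "nat set \<Rightarrow> tm \<Rightarrow> tconf \<Rightarrow> bool" where
  "valid_conf \<Gamma> T C \<longleftrightarrow> (case C of (s, tp, h) \<Rightarrow> s < tm_nst T \<and> (\<forall>i. tp i \<in> \<Gamma>))"

definition init_conf :: "nat \<Rightarrow> nat \<Rightarrow> nat" where
  "init_conf B v = pair 0 (pair 0 (pair (v mod B) (v div B)))"

lemma total_rec_init_conf: "0 < B \<Longrightarrow> total_rec g \<Longrightarrow> total_rec (\<lambda>x. init_conf B (g x))"
  unfolding init_conf_def by (intro total_rec_intros total_rec_div total_rec_mod)

context
  fixes \<Gamma> :: "nat set" and B bl :: nat and T :: tm
  assumes wf: "wf_tm \<Gamma> T" and blank: "bl \<in> \<Gamma>" and codes_lt: "\<forall>a\<in>\<Gamma>. sym_code bl a < B"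
    and B: "2 \<le> B"
begin

lemma delta_table_lookup:
  assumes "s < tm_nst T" "a < B"
  shows "list_hd_code ((list_tl_code ^^ (s * B + a)) (delta_table B bl T)) = delta_code T bl s a"
proof -
  have "s * B + a < Suc s * B" using assms(2) by simp
  also have "\<dots> \<le> tm_nst T * B" using assms(1) by (intro mult_right_mono) auto
  finally have "s * B + a < tm_nst T * B" .
  moreover have "(s * B + a) div B = s" "(s * B + a) mod B = a" using assms(2) by auto
  ultimately show ?thesis unfolding delta_table_def by (simp add: list_nth_code)
qed

lemma conf_step_simulates:
  assumes "valid_conf \<Gamma> T C" "codes_conf B bl C c"
  shows "valid_conf \<Gamma> T (tm_step T C) \<and> codes_conf B bl (tm_step T C) (conf_step B (delta_table B bl T) c)"
proof -
  obtain s tp h where C: "C = (s, tp, h)" by (cases C)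
  from assms obtain t where c: "c = pair s t" and t: "codes_tape B bl tp h t"
    and s: "s < tm_nst T" and tp: "\<forall>i. tp i \<in> \<Gamma>"
    unfolding C codes_conf_def valid_conf_def by auto
  show ?thesis
  proof (cases "s = 1")
    case True
    then show ?thesis using assms by (simp add: C c tm_step_def conf_step_def)
  next
    case False
    obtain s' a' d where delta: "tm_delta T s (tp h) = (s', a', d)" by (cases "tm_delta T s (tp h)")
    have "fst (tm_delta T s (tp h)) < tm_nst T \<and> fst (snd (tm_delta T s (tp h))) \<in> \<Gamma>"
      using wf s tp unfolding wf_tm_def by blast
    then have s': "s' < tm_nst T" and a': "a' \<in> \<Gamma>" using delta by simp_all
    have "list_hd_code ((list_tl_code ^^ (s * B + sym_code bl (tp h))) (delta_table B bl T)) =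
        pair s' (pair (sym_code bl a') (dir_code d))"
      using delta_table_lookup[OF s] codes_lt tp delta by (simp add: delta_code_def)
    then have step: "conf_step B (delta_table B bl T) c =
        pair s' (tape_move B (dir_code d) (tape_write (sym_code bl a') t))"
      using False codes_tape_head[OF t] by (simp add: conf_step_def c)
    have "codes_tape B bl (tp(h := a')) (h + (case d of Lmv \<Rightarrow> -1 | Rmv \<Rightarrow> 1 | Smv \<Rightarrow> 0))
        (tape_move B (dir_code d) (tape_write (sym_code bl a') t))"
      using codes_tape_move[OF codes_tape_write[OF t]] B codes_lt a' by simp
    then show ?thesis
      using False delta step s' a' tp by (simp add: C tm_step_def codes_conf_def valid_conf_def)
  qed
qed

lemma funpow_conf_step_simulates:
  assumes "valid_conf \<Gamma> T C" "codes_conf B bl C c"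
  shows "valid_conf \<Gamma> T ((tm_step T ^^ n) C) \<and>
    codes_conf B bl ((tm_step T ^^ n) C) ((conf_step B (delta_table B bl T) ^^ n) c)"
proof (induction n)
  case (Suc n)
  from conf_step_simulates[OF Suc[THEN conjunct1] Suc[THEN conjunct2]] show ?case by simp
qed (simp add: assms)

lemma init_conf_codes:
  assumes "set xs \<subseteq> \<Gamma>"
  shows "valid_conf \<Gamma> T (tm_init bl xs) \<and>
    codes_conf B bl (tm_init bl xs) (init_conf B (word_value B bl xs))"
proof
  show "valid_conf \<Gamma> T (tm_init bl xs)"
    using wf blank assms by (auto simp: valid_conf_def tm_init_def wf_tm_def)
next
  let ?v = "word_value B bl xs"
  have codes: "\<forall>x\<in>set xs. sym_code bl x < B" using assms codes_lt by auto
  let ?tp = "\<lambda>i. if 0 \<le> i \<and> i < int (length xs) then xs ! nat i else bl"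
  have "codes_tape B bl ?tp 0 (pair 0 (pair (?v mod B) (?v div B)))"
    unfolding codes_tape_def
  proof (intro exI conjI allI)
    show "pair 0 (pair (?v mod B) (?v div B)) = pair 0 (pair (sym_code bl (?tp 0)) (?v div B))"
      using digit_word_value[OF codes, of 0] by (simp add: digit_0)
    show "digit B k 0 = sym_code bl (?tp (0 - 1 - int k))" for k
      by simp
    show "digit B k (?v div B) = sym_code bl (?tp (0 + 1 + int k))" for k
      using digit_word_value[OF codes, of "Suc k"] by (simp add: digit_Suc nat_add_distrib)
  qed
  then show "codes_conf B bl (tm_init bl xs) (init_conf B ?v)"
    by (simp add: codes_conf_def tm_init_def init_conf_def)
qed

end

(* The output is read off by moving the head left past every non-blank cell (l < B ^ l moves
   suffice) and then dividing out the factors B contributed by blank cells before the word. *)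
definition left_end :: "nat \<Rightarrow> nat \<Rightarrow> nat" where
  "left_end B t = (tape_left B ^^ pfst t) t"

definition tape_value :: "nat \<Rightarrow> nat \<Rightarrow> nat" where
  "tape_value B t = pfst (psnd t) + B * psnd (psnd t)"

definition strip_zeros :: "nat \<Rightarrow> nat \<Rightarrow> nat" where
  "strip_zeros B n = (if n \<noteq> 0 \<and> n mod B = 0 then n div B else n)"

definition output_value :: "nat \<Rightarrow> nat \<Rightarrow> nat" where
  "output_value B t = (let v = tape_value B (left_end B t) in (strip_zeros B ^^ v) v)"

lemma total_rec_output_value:
  assumes "0 < B" "total_rec g"
  shows "total_rec (\<lambda>x. output_value B (g x))"
proof -
  have "total_rec (tape_left B)" "total_rec (strip_zeros B)"
    unfolding tape_left_def strip_zeros_def Let_def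
    by (intro total_rec_intros total_rec_div total_rec_mod assms)+
  then show ?thesis
    unfolding output_value_def left_end_def tape_value_def Let_def
    by (intro total_rec_intros assms)
qed

lemma less_power_self: "2 \<le> B \<Longrightarrow> p < B ^ p"
  using less_exp[of p] power_mono[of 2 B p] by linarith

lemma funpow_strip_zeros:
  assumes "0 < B" "E mod B \<noteq> 0"
  shows "(strip_zeros B ^^ j) (B ^ p * E) = B ^ (p - j) * E"
proof (induction j arbitrary: p)
  case (Suc j)
  have "E \<noteq> 0" using assms(2) by (rule contrapos_nn) simp
  then have "strip_zeros B (B ^ p * E) = B ^ (p - 1) * E"
    using assms by (cases p) (simp_all add: strip_zeros_def)
  then have "(strip_zeros B ^^ Suc j) (B ^ p * E) = (strip_zeros B ^^ j) (B ^ (p - 1) * E)"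
    by (simp only: funpow_Suc_right comp_apply)
  also have "\<dots> = B ^ (p - 1 - j) * E" by (rule Suc.IH)
  finally show ?case by (simp only: diff_Suc_eq_diff_pred)
qed simp

context
  fixes B bl :: nat and tp :: "int \<Rightarrow> nat"
  assumes B: "2 \<le> B" and codes_lt: "\<forall>i. sym_code bl (tp i) < B"
begin

lemma codes_tape_funpow_left:
  assumes "codes_tape B bl tp h t"
  shows "codes_tape B bl tp (h - int n) ((tape_left B ^^ n) t) \<and>
    pfst ((tape_left B ^^ n) t) = pfst t div B ^ n"
proof (induction n)
  case (Suc n)
  have "codes_tape B bl tp (h - int n - 1) (tape_left B ((tape_left B ^^ n) t))"
    using codes_tape_left[OF Suc[THEN conjunct1]] B codes_lt by simp
  moreover have "pfst (tape_left B ((tape_left B ^^ n) t)) = pfst t div B ^ n div B"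
    using Suc[THEN conjunct2] by (simp only: pfst_tape_left)
  moreover have "pfst t div B ^ n div B = pfst t div B ^ Suc n"
    by (metis div_mult2_eq power_Suc2)
  ultimately show ?case by (simp add: algebra_simps)
qed (simp add: assms)

lemma codes_tape_left_end:
  assumes "codes_tape B bl tp h t"
  obtains h' where "codes_tape B bl tp h' (left_end B t)" and "\<forall>i<h'. tp i = bl"
proof -
  let ?h' = "h - int (pfst t)"
  have "pfst t div B ^ pfst t = 0" using less_power_self[OF B] by simp
  then have t': "codes_tape B bl tp ?h' (left_end B t)" and "pfst (left_end B t) = 0"
    using codes_tape_funpow_left[OF assms] by (simp_all add: left_end_def)
  then have blank_left: "sym_code bl (tp (?h' - 1 - int k)) = 0" for k
    by (auto simp: codes_tape_def)
  have "tp i = bl" if "i < ?h'" for i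
  proof -
    have "?h' - 1 - int (nat (?h' - 1 - i)) = i" using that by simp
    then show ?thesis using blank_left[of "nat (?h' - 1 - i)"] by simp
  qed
  with t' that show ?thesis by blast
qed

lemma digit_tape_value:
  assumes "codes_tape B bl tp h t"
  shows "digit B k (tape_value B t) = sym_code bl (tp (h + int k))"
proof -
  from assms obtain l r where t: "t = pair l (pair (sym_code bl (tp h)) r)"
    and r: "\<forall>k. digit B k r = sym_code bl (tp (h + 1 + int k))"
    unfolding codes_tape_def by blast
  have "tape_value B t = r * B + sym_code bl (tp h)" by (simp add: tape_value_def t)
  then show ?thesis
    using r codes_lt by (cases k) (simp_all add: digit_mult_add, simp add: algebra_simps)
qed

lemma output_value_eq_word_value:
  assumes t: "codes_tape B bl tp h t" and out: "tm_tape_output \<Sigma> bl tp ys"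
    and \<Sigma>_codes: "\<forall>a\<in>\<Sigma>. sym_code bl a < B" and blank: "bl \<notin> \<Sigma>"
  shows "output_value B t = word_value B bl ys"
proof -
  obtain h' where t': "codes_tape B bl tp h' (left_end B t)" and left: "\<forall>i<h'. tp i = bl"
    using codes_tape_left_end[OF t] .
  from out obtain a where ys: "set ys \<subseteq> \<Sigma>" and tp:
    "\<forall>i. tp i = (if a \<le> i \<and> i < a + int (length ys) then ys ! nat (i - a) else bl)"
    unfolding tm_tape_output_def by blast
  have ys_codes: "\<forall>y\<in>set ys. sym_code bl y < B" using ys \<Sigma>_codes by auto
  define p where "p = nat (a - h')"
  let ?E = "word_value B bl ys"
  have start: "h' \<le> a" if "ys \<noteq> []"
  proof -
    have "tp a = ys ! 0" using tp that by simp
    then have "tp a \<noteq> bl" using that ys blank nth_mem by fastforce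
    then show ?thesis using left by (meson not_le)
  qed
  have shifted: "tape_value B (left_end B t) = B ^ p * ?E"
  proof (rule digit_eqI[OF B])
    fix k
    have cell: "tp (h' + int k) = (if p \<le> k \<and> k < p + length ys then ys ! (k - p) else bl)"
      if "ys \<noteq> []"
    proof -
      have "h' \<le> a" using start[OF that] .
      then have window: "(a \<le> h' + int k \<and> h' + int k < a + int (length ys)) \<longleftrightarrow>
          (p \<le> k \<and> k < p + length ys)"
        and index: "p \<le> k \<Longrightarrow> nat (h' + int k - a) = k - p"
        unfolding p_def by linarith+
      show ?thesis using tp[rule_format, of "h' + int k"] unfolding window by (auto simp: index)
    qed
    have "digit B k (B ^ p * ?E) =
        (if k < p then 0 else if k - p < length ys then sym_code bl (ys ! (k - p)) else 0)"
      using digit_power_mult[of B k p ?E] digit_word_value[OF ys_codes, of "k - p"] B by simp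
    then show "digit B k (tape_value B (left_end B t)) = digit B k (B ^ p * ?E)"
      unfolding digit_tape_value[OF t'] using tp cell by (cases "ys = []") auto
  qed
  show ?thesis
  proof (cases "ys = []")
    case True
    then show ?thesis using shifted by (simp add: output_value_def)
  next
    case False
    have "?E mod B = sym_code bl (ys ! 0)"
      using digit_word_value[OF ys_codes, of 0] False by (simp add: digit_0)
    moreover have "ys ! 0 \<noteq> bl" using False ys blank nth_mem by fastforce
    ultimately have E: "?E mod B \<noteq> 0" by simp
    then have "?E \<noteq> 0" by (rule contrapos_nn) simp
    then have "B ^ p \<le> B ^ p * ?E" by simp
    then have "p \<le> B ^ p * ?E" using less_power_self[OF B, of p] by linarith
    have "(strip_zeros B ^^ (B ^ p * ?E)) (B ^ p * ?E) = B ^ (p - B ^ p * ?E) * ?E"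
      using B by (intro funpow_strip_zeros E) simp
    also have "\<dots> = ?E" using \<open>p \<le> B ^ p * ?E\<close> by simp
    finally show ?thesis using shifted by (simp add: output_value_def)
  qed
qed

end

section \<open>Hypotheses supplied by the q-ECTT\<close>

lemma tm_computes_within_mono:
  "tm_computes_within \<Sigma> bl T xs ys k \<Longrightarrow> k \<le> k' \<Longrightarrow> tm_computes_within \<Sigma> bl T xs ys k'"
  unfolding tm_computes_within_def by (meson order.trans)

lemma tm_computes_within_halts:
  assumes "tm_computes_within \<Sigma> bl T xs ys k"
  obtains tp h where "(tm_step T ^^ k) (tm_init bl xs) = (1, tp, h)" and "tm_tape_output \<Sigma> bl tp ys"
proof -
  from assms obtain j where "j \<le> k" and halts: "case (tm_step T ^^ j) (tm_init bl xs) of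
      (s, tp, h) \<Rightarrow> s = 1 \<and> tm_tape_output \<Sigma> bl tp ys"
    unfolding tm_computes_within_def by (elim exE conjE) simp
  obtain s tp h where conf: "(tm_step T ^^ j) (tm_init bl xs) = (s, tp, h)"
    by (rule prod_cases3)
  with halts have s: "s = 1" and out: "tm_tape_output \<Sigma> bl tp ys" by simp_all
  have "(tm_step T ^^ k) (tm_init bl xs) = (tm_step T ^^ (k - j)) ((tm_step T ^^ j) (tm_init bl xs))"
    using \<open>j \<le> k\<close> by (metis funpow_add le_add_diff_inverse2 comp_apply)
  also have "\<dots> = (1, tp, h)"
    unfolding conf s by (rule funpow_fixed_point) (simp add: tm_step_def)
  finally show ?thesis using out that by blast
qed

locale tm_hypotheses =
  fixes B bl :: nat and q Q :: "nat \<Rightarrow> nat \<Rightarrow> nat" and sz :: "nat \<Rightarrow> nat"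
    and \<phi> :: "nat \<Rightarrow> nat list"
  assumes B: "2 \<le> B" and q: "total_rec2 q" and Q: "total_rec2 Q" and sz: "total_rec sz"
    and \<phi>: "total_rec (\<lambda>x. list_encode (\<phi> x))"
begin

(* A hypothesis r codes (table, cT, c, K): the transition table of a Turing machine, its q-ECTT
   constant, and the constants of the time bound K * Q c n + K defining Qclass. *)
definition time_budget :: "nat \<Rightarrow> nat \<Rightarrow> nat" where
  "time_budget r x = (let cT = pfst (psnd r); c = pfst (psnd (psnd r)); K = psnd (psnd (psnd r)) in
     q cT (K * Q c (sz x) + K))"

definition clocked_run :: "nat \<Rightarrow> nat \<Rightarrow> nat" where
  "clocked_run r x = (conf_step B (pfst r) ^^ time_budget r x) (init_conf B (word_value B bl (\<phi> x)))"

definition consistent :: "nat \<Rightarrow> nat \<Rightarrow> nat \<Rightarrow> bool" where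
  "consistent r x y \<longleftrightarrow>
     pfst (clocked_run r x) = 1 \<and> output_value B (psnd (clocked_run r x)) = word_value B bl (\<phi> y)"

lemma rec_pred3_consistent: "rec_pred3 consistent"
proof -
  have B0: "0 < B" using B by simp
  have word: "total_rec (\<lambda>x. word_value B bl (\<phi> (g x)))" if "total_rec g" for g
    using total_rec_word_value[OF total_rec_comp[OF \<phi> that]] by simp
  have "total_rec (\<lambda>z. clocked_run (pfst z) (pfst (psnd z)))"
    unfolding clocked_run_def time_budget_def Let_def
    by (intro total_rec_funpow_param[OF total_rec2_conf_step[OF B0]] total_rec_intros
        total_rec2_comp[OF q] total_rec2_comp[OF Q] total_rec_comp[OF sz]
        total_rec_init_conf[OF B0] word)
  then show ?thesis
    unfolding rec_pred3_def consistent_def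
    by (intro total_rec_intros rec_pred_eq total_rec_output_value[OF B0] word)
qed

lemma consistent_functional:
  assumes inj: "inj \<phi>" and words: "\<forall>x. set (\<phi> x) \<subseteq> \<Sigma>"
    and \<Sigma>_codes: "\<forall>a\<in>\<Sigma>. sym_code bl a < B" and blank: "bl \<notin> \<Sigma>"
    and "consistent r x y" "consistent r x y'"
  shows "y' = y"
proof -
  have "word_value B bl (\<phi> y') = word_value B bl (\<phi> y)"
    using assms(5,6) by (simp add: consistent_def)
  then have "\<phi> y' = \<phi> y"
    using B words \<Sigma>_codes blank by (intro word_value_inj) auto
  with inj show ?thesis by (simp add: inj_eq)
qed

lemma consistent_if_computes_within:
  assumes wf: "wf_tm \<Gamma> T" and blank: "bl \<in> \<Gamma>" "bl \<notin> \<Sigma>" and \<Sigma>: "\<Sigma> \<subseteq> \<Gamma>"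
    and codes_lt: "\<forall>a\<in>\<Gamma>. sym_code bl a < B" and words: "set (\<phi> x) \<subseteq> \<Sigma>"
    and table: "pfst r = delta_table B bl T"
    and computes: "tm_computes_within \<Sigma> bl T (\<phi> x) (\<phi> y) (time_budget r x)"
  shows "consistent r x y"
proof -
  let ?k = "time_budget r x"
  obtain tp h where halt_k: "(tm_step T ^^ ?k) (tm_init bl (\<phi> x)) = (1, tp, h)"
    and out: "tm_tape_output \<Sigma> bl tp (\<phi> y)"
    using tm_computes_within_halts[OF computes] .
  have init: "valid_conf \<Gamma> T (tm_init bl (\<phi> x))"
    "codes_conf B bl (tm_init bl (\<phi> x)) (init_conf B (word_value B bl (\<phi> x)))"
    using init_conf_codes[OF wf blank(1) codes_lt B] words \<Sigma> by auto
  from funpow_conf_step_simulates[OF wf blank(1) codes_lt B init, of ?k]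
  have "valid_conf \<Gamma> T (1, tp, h)" "codes_conf B bl (1, tp, h) (clocked_run r x)"
    unfolding halt_k clocked_run_def table by simp_all
  then obtain t where "clocked_run r x = pair 1 t" "codes_tape B bl tp h t" "\<forall>i. tp i \<in> \<Gamma>"
    by (auto simp: codes_conf_def valid_conf_def)
  with output_value_eq_word_value[OF B _ this(2) out] codes_lt \<Sigma> blank(2) show ?thesis
    by (auto simp: consistent_def)
qed

lemma Qclass_has_consistent_hypothesis:
  assumes f: "f \<in> Qclass Q sz Ms" and ectt: "q_ECTT q \<Sigma> \<Gamma> bl \<phi> Ms" and mono: "mono2 q"
    and blank: "bl \<in> \<Gamma>" "bl \<notin> \<Sigma>" and \<Sigma>: "\<Sigma> \<subseteq> \<Gamma>"
    and codes_lt: "\<forall>a\<in>\<Gamma>. sym_code bl a < B" and words: "\<forall>x. set (\<phi> x) \<subseteq> \<Sigma>"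
  shows "\<exists>r. \<forall>x. f x \<noteq> None \<longrightarrow> consistent r x (the (f x))"
proof -
  from f obtain c M K where "M \<in> Ms" and fM: "mfun M = f"
    and time: "\<forall>x. f x \<noteq> None \<longrightarrow> mtime M x \<le> K * Q c (sz x) + K"
    unfolding Qclass_def by blast
  with ectt obtain cT T where wf: "wf_tm \<Gamma> T" and sim: "\<forall>x. mhalts M x \<longrightarrow>
      tm_computes_within \<Sigma> bl T (\<phi> x) (\<phi> (the (mfun M x))) (q cT (mtime M x))"
    unfolding q_ECTT_def by blast
  let ?r = "pair (delta_table B bl T) (pair cT (pair c K))"
  have "consistent ?r x (the (f x))" if "f x \<noteq> None" for x
  proof (rule consistent_if_computes_within[OF wf blank \<Sigma> codes_lt])
    have "mhalts M x" using that fM by (auto simp: mfun_def split: if_splits)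
    moreover have "q cT (mtime M x) \<le> time_budget ?r x"
      using mono time that by (simp add: time_budget_def mono2_def)
    ultimately show "tm_computes_within \<Sigma> bl T (\<phi> x) (\<phi> (the (f x))) (time_budget ?r x)"
      using sim fM by (blast intro: tm_computes_within_mono)
  qed (use words in auto)
  then show ?thesis by blast
qed

end

theorem theorem3p2:
  fixes q Q :: "nat \<Rightarrow> nat \<Rightarrow> nat"
    and sz :: "nat \<Rightarrow> nat"
    and \<Sigma> \<Gamma> :: "nat set" and blank :: nat
    and \<phi> :: "nat \<Rightarrow> nat list"
    and Ms :: "cmodel set"
  assumes "total_rec2 q" and "mono2 q"
    and "total_rec2 Q" and "mono2 Q"
    and "total_rec sz"
    and "finite \<Sigma>" and "finite \<Gamma>" and "blank \<notin> \<Sigma>" and "\<Sigma> \<union> {blank} \<subseteq> \<Gamma>"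
    and "inj \<phi>" and "\<forall>x. set (\<phi> x) \<subseteq> \<Sigma>" and "total_rec (\<lambda>x. list_encode (\<phi> x))"
    and "Ms \<subseteq> {M. comp_model M}"
    and "q_ECTT q \<Sigma> \<Gamma> blank \<phi> Ms"
  shows "solves_learning (Qclass Q sz Ms)"
proof -
  define B where "B = Max \<Gamma> + 2"
  have blank_in: "blank \<in> \<Gamma>" and \<Sigma>: "\<Sigma> \<subseteq> \<Gamma>" using assms(9) by auto
  have codes_lt: "\<forall>a\<in>\<Gamma>. sym_code blank a < B"
    using Max_ge[OF assms(7)] blank_in by (fastforce simp: sym_code_def B_def)
  interpret tm_hypotheses B blank q Q sz \<phi>
    using assms(1,3,5,12) by unfold_locales (simp_all add: B_def)
  show ?thesis
  proof (rule solves_learning_by_enumeration[OF rec_pred3_consistent])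
    show "y' = y" if "consistent r x y" "consistent r x y'" for r x y y'
      using consistent_functional[OF assms(10,11) _ assms(8) that] codes_lt \<Sigma> by blast
    show "\<exists>r. \<forall>x. f x \<noteq> None \<longrightarrow> consistent r x (the (f x))" if "f \<in> Qclass Q sz Ms" for f
      using Qclass_has_consistent_hypothesis[OF that assms(14,2) blank_in assms(8) \<Sigma> codes_lt assms(11)] .
  qed
qed

end
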